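(* For each $n\ge1$ let $\mathrm T_n=(T_n,\mathrm D_n)$ be a random labeled multitype plane tree with valid law $\nu_n$, and let $\mathrm T_n^{\mathrm{sym}}$ have law $\nu_n^{\mathrm{sym}}$. Suppose there exist positive sequences $a_n\to0$, $b_n\to0$ and a $C([0,1],\mathbb R^2)$-valued random process $(C,Z)$ with $(a_nC_{\mathrm T_n^{\mathrm{sym}}},b_nZ_{\mathrm T_n^{\mathrm{sym}}})\to(C,Z)$ in distribution for the uniform topology. Write $\theta_n=\theta_{T_n}$. Then for all $\beta>0$ there exists $\alpha=\alpha(\beta)>0$ such that \[ \limsup_n\mathbb P\Big(\sup_{|i-j|\le\lfloor\alpha|T_n|\rfloor}a_n\,\mathrm{dist}\big(\theta_n(i),\theta_n(j)\big)>\beta\Big)<\beta. \]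
   Context: Plane trees are rooted, encoded by Ulam–Harris words, with vertex types in a countable set $S$; $\mathrm{dist}$ is graph distance; a labeled tree $(t,\mathrm d)$ has real displacements on edges and $\ell(v)$ is the sum of displacements from the root to $v$. $P_t$ is the set of vectors of permutations of the children of each vertex; $\sigma(t,\mathrm d)$ reorders children accordingly with displacements following edges; the symmetrization of a random labeled tree is $\sigma(T,\mathrm D)$ with $\sigma$ uniform on $P_T$ given the tree, and $\nu^{\mathrm{sym}}$ is its law. A law $\nu$ is valid if (i) the law of the unlabeled tree is invariant under all $\sigma\in P_t$, (ii) the child-displacement vectors $D_v=(D_{v,v1},\dots,D_{v,vk(v)})$ are conditionally independent given $T$, (iii) the conditional law of $D_v$ depends only on the type of $v$ and the types of its children. The contour exploration $\theta_t:\{0,\dots,2|t|-2\}\to V(t)$ is the depth-first walk ($\theta_t(0)=\emptyset$; $\theta_t(i)$ is the lexicographically first unvisited child of $\theta_t(i-1)$, else its parent); $C_{\mathrm t}(i/(2|t|-2))$ is the height of $\theta_t(i)$ and $Z_{\mathrm t}(i/(2|t|-2))=\ell(\theta_t(i))$, linearly interpolated on $[0,1]$. *)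

theory Defs
  imports "HOL-Probability.Probability" "HOL-Combinatorics.Permutations"
begin

(* Plane trees as finite sets of Ulam-Harris words (nat lists); [] is the root. *)
definition plane_tree :: "nat list set \<Rightarrow> bool" where
  "plane_tree t \<longleftrightarrow> finite t \<and> [] \<in> t \<and> (\<forall>v i. v @ [i] \<in> t \<longrightarrow> v \<in> t)
     \<and> (\<forall>v i j. v @ [i] \<in> t \<and> j < i \<longrightarrow> v @ [j] \<in> t)"

definition nchild :: "nat list set \<Rightarrow> nat list \<Rightarrow> nat" where
  "nchild t v = card {i. v @ [i] \<in> t}"

definition perms :: "nat list set \<Rightarrow> (nat list \<Rightarrow> nat \<Rightarrow> nat) set" where
  "perms t = {\<sigma>. (\<forall>v\<in>t. \<sigma> v permutes {..<nchild t v}) \<and> (\<forall>v. v \<notin> t \<longrightarrow> \<sigma> v = id)}"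

fun perm_word :: "(nat list \<Rightarrow> nat \<Rightarrow> nat) \<Rightarrow> nat list \<Rightarrow> nat list \<Rightarrow> nat list" where
  "perm_word \<sigma> u [] = []"
| "perm_word \<sigma> u (i # w) = \<sigma> u i # perm_word \<sigma> (u @ [i]) w"

definition perm_vertex :: "(nat list \<Rightarrow> nat \<Rightarrow> nat) \<Rightarrow> nat list \<Rightarrow> nat list" where
  "perm_vertex \<sigma> v = perm_word \<sigma> [] v"

definition sym_tree :: "(nat list \<Rightarrow> nat \<Rightarrow> nat) \<Rightarrow> nat list set \<Rightarrow> nat list set" where
  "sym_tree \<sigma> t = perm_vertex \<sigma> ` t"

(* vertex data (types, or displacement of the edge into a vertex) following the vertices *)
definition sym_lab :: "(nat list \<Rightarrow> nat \<Rightarrow> nat) \<Rightarrow> nat list set \<Rightarrow> (nat list \<Rightarrow> 'b) \<Rightarrow> nat list \<Rightarrow> 'b" where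
  "sym_lab \<sigma> t f = (\<lambda>w. f (inv_into t (perm_vertex \<sigma>) w))"

definition typed_shape :: "nat list set \<Rightarrow> (nat list \<Rightarrow> 's) \<Rightarrow> nat list set \<times> (nat list \<Rightarrow> 's)" where
  "typed_shape t ty = (t, \<lambda>v. if v \<in> t then ty v else undefined)"

(* child displacement vector D_v = (D_{v,v0},...,D_{v,v(k-1)}); d w is the displacement of the edge into w *)
definition child_disp :: "nat list set \<Rightarrow> (nat list \<Rightarrow> real) \<Rightarrow> nat list \<Rightarrow> nat \<Rightarrow> real" where
  "child_disp t d v = (\<lambda>i\<in>{..<nchild t v}. d (v @ [i]))"

definition lab :: "(nat list \<Rightarrow> real) \<Rightarrow> nat list \<Rightarrow> real" where
  "lab d v = (\<Sum>j\<in>{1..length v}. d (take j v))"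

fun lcp :: "nat list \<Rightarrow> nat list \<Rightarrow> nat list" where
  "lcp (x # xs) (y # ys) = (if x = y then x # lcp xs ys else [])"
| "lcp _ _ = []"

definition tree_dist :: "nat list \<Rightarrow> nat list \<Rightarrow> nat" where
  "tree_dist u v = length u + length v - 2 * length (lcp u v)"

(* contour exploration (depth-first walk); fuel argument only for termination *)
fun contour_aux :: "nat \<Rightarrow> nat list set \<Rightarrow> nat list \<Rightarrow> nat list list" where
  "contour_aux 0 t v = [v]"
| "contour_aux (Suc m) t v =
     v # concat (map (\<lambda>i. contour_aux m t (v @ [i]) @ [v]) [0..<nchild t v])"

definition theta :: "nat list set \<Rightarrow> nat \<Rightarrow> nat list" where
  "theta t i = contour_aux (card t) t [] ! i"

definition lin_interp :: "nat \<Rightarrow> (nat \<Rightarrow> real) \<Rightarrow> real \<Rightarrow> real" where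
  "lin_interp N f s =
     (if N = 0 then f 0 else
      (let x = s * real N; i = nat \<lfloor>x\<rfloor> in
        if i \<ge> N then f N else f i + (x - real i) * (f (Suc i) - f i)))"

definition contour_fun :: "nat list set \<Rightarrow> real \<Rightarrow> real" where
  "contour_fun t = lin_interp (2 * card t - 2) (\<lambda>i. real (length (theta t i)))"

definition label_fun :: "nat list set \<Rightarrow> (nat list \<Rightarrow> real) \<Rightarrow> real \<Rightarrow> real" where
  "label_fun t d = lin_interp (2 * card t - 2) (\<lambda>i. lab d (theta t i))"

definition random_labeled_tree ::
  "'a measure \<Rightarrow> ('a \<Rightarrow> nat list set) \<Rightarrow> ('a \<Rightarrow> nat list \<Rightarrow> 's) \<Rightarrow> ('a \<Rightarrow> nat list \<Rightarrow> real) \<Rightarrow> bool" where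
  "random_labeled_tree M T ty D \<longleftrightarrow> prob_space M \<and> (\<forall>\<omega>\<in>space M. plane_tree (T \<omega>))
     \<and> (\<forall>s. {\<omega>\<in>space M. typed_shape (T \<omega>) (ty \<omega>) = s} \<in> sets M)
     \<and> (\<forall>v. (\<lambda>\<omega>. D \<omega> v) \<in> borel_measurable M)"

definition shape_event ::
  "'a measure \<Rightarrow> ('a \<Rightarrow> nat list set) \<Rightarrow> ('a \<Rightarrow> nat list \<Rightarrow> 's) \<Rightarrow> nat list set \<times> (nat list \<Rightarrow> 's) \<Rightarrow> 'a set" where
  "shape_event M T ty s = {\<omega>\<in>space M. typed_shape (T \<omega>) (ty \<omega>) = s}"

definition valid_law ::
  "'a measure \<Rightarrow> ('a \<Rightarrow> nat list set) \<Rightarrow> ('a \<Rightarrow> nat list \<Rightarrow> 's) \<Rightarrow> ('a \<Rightarrow> nat list \<Rightarrow> real) \<Rightarrow> bool" where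
  "valid_law M T ty D \<longleftrightarrow> random_labeled_tree M T ty D
   \<comment> \<open>(i) invariance of the law of the multitype tree\<close>
   \<and> (\<forall>t \<tau> \<sigma>. plane_tree t \<longrightarrow> \<sigma> \<in> perms t \<longrightarrow>
        measure M (shape_event M T ty (typed_shape t \<tau>)) =
        measure M (shape_event M T ty (typed_shape (sym_tree \<sigma> t) (sym_lab \<sigma> t \<tau>))))
   \<comment> \<open>(ii) conditional independence of the child displacement vectors given the tree\<close>
   \<and> (\<forall>s. measure M (shape_event M T ty s) > 0 \<longrightarrow>
        prob_space.indep_vars (uniform_measure M (shape_event M T ty s))
          (\<lambda>v. PiM {..<nchild (fst s) v} (\<lambda>_. borel))
          (\<lambda>v \<omega>. child_disp (fst s) (D \<omega>) v) (fst s))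
   \<comment> \<open>(iii) conditional law of D_v depends only on type of v and types of its children\<close>
   \<and> (\<forall>s s' v v'. measure M (shape_event M T ty s) > 0 \<longrightarrow> measure M (shape_event M T ty s') > 0
        \<longrightarrow> v \<in> fst s \<longrightarrow> v' \<in> fst s' \<longrightarrow> snd s v = snd s' v'
        \<longrightarrow> nchild (fst s) v = nchild (fst s') v'
        \<longrightarrow> (\<forall>i < nchild (fst s) v. snd s (v @ [i]) = snd s' (v' @ [i]))
        \<longrightarrow> distr (uniform_measure M (shape_event M T ty s)) (PiM {..<nchild (fst s) v} (\<lambda>_. borel))
              (\<lambda>\<omega>. child_disp (fst s) (D \<omega>) v)
          = distr (uniform_measure M (shape_event M T ty s')) (PiM {..<nchild (fst s') v'} (\<lambda>_. borel))
              (\<lambda>\<omega>. child_disp (fst s') (D \<omega>) v'))"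

(* E[F(T^sym)] where T^sym = sigma(T,D), sigma uniform on P_T given T (law nu^sym) *)
definition sym_expect ::
  "'a measure \<Rightarrow> ('a \<Rightarrow> nat list set) \<Rightarrow> ('a \<Rightarrow> nat list \<Rightarrow> real)
     \<Rightarrow> (nat list set \<Rightarrow> (nat list \<Rightarrow> real) \<Rightarrow> real) \<Rightarrow> real" where
  "sym_expect M T D F =
     (\<integral>\<omega>. (\<Sum>\<sigma>\<in>perms (T \<omega>). F (sym_tree \<sigma> (T \<omega>)) (sym_lab \<sigma> (T \<omega>) (D \<omega>)))
            / real (card (perms (T \<omega>))) \<partial>M)"

definition unif_dist :: "(real \<Rightarrow> real \<times> real) \<Rightarrow> (real \<Rightarrow> real \<times> real) \<Rightarrow> real" where
  "unif_dist f g = (SUP s\<in>{0..1}. dist (f s) (g s))"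

definition bcont_functional :: "((real \<Rightarrow> real \<times> real) \<Rightarrow> real) \<Rightarrow> bool" where
  "bcont_functional G \<longleftrightarrow>
     (\<exists>B. \<forall>f. continuous_on {0..1} f \<longrightarrow> \<bar>G f\<bar> \<le> B) \<and>
     (\<forall>f. continuous_on {0..1} f \<longrightarrow> (\<forall>e>0. \<exists>\<delta>>0. \<forall>g. continuous_on {0..1} g \<and> unif_dist f g < \<delta>
          \<longrightarrow> \<bar>G g - G f\<bar> < e))"

definition cont_process :: "'b measure \<Rightarrow> ('b \<Rightarrow> real \<Rightarrow> real \<times> real) \<Rightarrow> bool" where
  "cont_process N X \<longleftrightarrow> prob_space N \<and> (\<forall>\<omega>\<in>space N. continuous_on {0..1} (X \<omega>))
     \<and> (\<forall>s\<in>{0..1}. (\<lambda>\<omega>. X \<omega> s) \<in> borel_measurable N)"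

end

theory Submission
  imports Defs
begin

(* Let h be the ramp, between beta/4 and beta/2, of the modulus of continuity at scale alpha of
   a_n times the contour function.  If two contour times at distance at most alpha |t| visit
   vertices at scaled distance more than beta, the lowest vertex visited in between is a common
   ancestor of both, so one of the two height differences exceeds beta/2 and h = 1; hence the
   probability in question is at most E h(T_n).  As h only depends on the shape, and the law of
   the typed shape is invariant under reordering children, E h(T_n) = E h(T_n^sym), which tends
   to E G(C, Z) for the corresponding bounded continuous functional G.  By uniform continuity of
   C and dominated convergence, E G(C, Z) < beta once alpha is small. *)

lemma perms_bij: "\<sigma> \<in> perms t \<Longrightarrow> bij (\<sigma> v)"
  unfolding perms_def by (cases "v \<in> t") (auto intro: permutes_bij)

lemma perms_permutes: "\<sigma> \<in> perms t \<Longrightarrow> u \<in> t \<Longrightarrow> \<sigma> u permutes {..<nchild t u}"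
  unfolding perms_def by auto

lemma length_perm_word [simp]: "length (perm_word \<sigma> u w) = length w"
  by (induction w arbitrary: u) auto

lemma perm_word_append: "perm_word \<sigma> u (w1 @ w2) = perm_word \<sigma> u w1 @ perm_word \<sigma> (u @ w1) w2"
  by (induction w1 arbitrary: u) auto

lemma inj_perm_word:
  assumes "\<And>v. inj (\<sigma> v)"
  shows "inj (perm_word \<sigma> u)"
proof (rule injI)
  show "perm_word \<sigma> u w1 = perm_word \<sigma> u w2 \<Longrightarrow> w1 = w2" for w1 w2
  proof (induction w1 arbitrary: u w2)
    case Nil then show ?case by (cases w2) auto
  next
    case (Cons i w1)
    then show ?case using assms by (cases w2) (auto dest: injD)
  qed
qed

lemma inj_perm_vertex: "\<sigma> \<in> perms t \<Longrightarrow> inj (perm_vertex \<sigma>)"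
  unfolding perm_vertex_def by (intro inj_perm_word bij_is_inj perms_bij)

lemma perm_vertex_Nil [simp]: "perm_vertex \<sigma> [] = []"
  by (simp add: perm_vertex_def)

lemma perm_vertex_snoc: "perm_vertex \<sigma> (u @ [i]) = perm_vertex \<sigma> u @ [\<sigma> u i]"
  by (simp add: perm_vertex_def perm_word_append)

lemma length_perm_vertex [simp]: "length (perm_vertex \<sigma> u) = length u"
  by (simp add: perm_vertex_def)

lemma perm_vertex_eq_snocE:
  assumes "perm_vertex \<sigma> w = v @ [j]"
  obtains u i where "w = u @ [i]" "perm_vertex \<sigma> u = v" "\<sigma> u i = j"
proof -
  have "w \<noteq> []" using assms by (metis length_perm_vertex length_0_conv snoc_eq_iff_butlast)
  then obtain u i where "w = u @ [i]" by (metis rev_exhaust)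
  with assms show thesis using that by (simp add: perm_vertex_snoc)
qed

lemma down_closed_eq_lessThan_card:
  fixes A :: "nat set"
  assumes "finite A" "\<And>i j. i \<in> A \<Longrightarrow> j < i \<Longrightarrow> j \<in> A"
  shows "A = {..<card A}"
proof (cases "A = {}")
  case False
  have "A = {..Max A}"
    using Max_in[OF assms(1) False] Max_ge[OF assms(1)] assms(2) by (fastforce simp: le_less)
  then show ?thesis by (metis card_atMost lessThan_Suc_atMost)
qed simp

lemma plane_tree_prefix: "plane_tree t \<Longrightarrow> u @ w \<in> t \<Longrightarrow> u \<in> t"
proof (induction w rule: rev_induct)
  case (snoc i w)
  then show ?case unfolding plane_tree_def by (metis append_assoc)
qed simp

lemma plane_tree_child_iff:
  assumes "plane_tree t"
  shows "u @ [i] \<in> t \<longleftrightarrow> i < nchild t u"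
proof -
  have "finite {i. u @ [i] \<in> t}"
    using assms unfolding plane_tree_def
    by (auto intro: finite_inverse_image[of t "\<lambda>i. u @ [i]"] simp: inj_on_def)
  then have "{i. u @ [i] \<in> t} = {..<nchild t u}"
    unfolding nchild_def
    by (rule down_closed_eq_lessThan_card) (use assms in \<open>auto simp: plane_tree_def\<close>)
  then show ?thesis by blast
qed

lemma sym_tree_child_iff:
  assumes t: "plane_tree t" and \<sigma>: "\<sigma> \<in> perms t" and u: "u \<in> t"
  shows "perm_vertex \<sigma> u @ [j] \<in> sym_tree \<sigma> t \<longleftrightarrow> j < nchild t u"
proof
  assume "perm_vertex \<sigma> u @ [j] \<in> sym_tree \<sigma> t"
  then obtain w where "w \<in> t" "perm_vertex \<sigma> w = perm_vertex \<sigma> u @ [j]"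
    unfolding sym_tree_def by auto
  moreover obtain v i where "w = v @ [i]" "perm_vertex \<sigma> v = perm_vertex \<sigma> u" "\<sigma> v i = j"
    using perm_vertex_eq_snocE[OF calculation(2)] .
  ultimately have "u @ [i] \<in> t" "\<sigma> u i = j"
    using injD[OF inj_perm_vertex[OF \<sigma>]] by auto
  then show "j < nchild t u"
    using permutes_image[OF perms_permutes[OF \<sigma> u]] plane_tree_child_iff[OF t] by blast
next
  assume "j < nchild t u"
  then obtain i where "i < nchild t u" "\<sigma> u i = j"
    using permutes_image[OF perms_permutes[OF \<sigma> u]] by (metis imageE lessThan_iff)
  then show "perm_vertex \<sigma> u @ [j] \<in> sym_tree \<sigma> t"
    unfolding sym_tree_def using plane_tree_child_iff[OF t]
    by (metis image_eqI perm_vertex_snoc)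
qed

lemma nchild_sym_tree:
  assumes "plane_tree t" "\<sigma> \<in> perms t" "u \<in> t"
  shows "nchild (sym_tree \<sigma> t) (perm_vertex \<sigma> u) = nchild t u"
  unfolding nchild_def[of "sym_tree \<sigma> t"] using sym_tree_child_iff[OF assms] by simp

lemma plane_tree_sym_tree:
  assumes t: "plane_tree t" and \<sigma>: "\<sigma> \<in> perms t"
  shows "plane_tree (sym_tree \<sigma> t)"
proof -
  have parent: "v \<in> sym_tree \<sigma> t" if vi: "v @ [i] \<in> sym_tree \<sigma> t" for v i
  proof -
    obtain w where "w \<in> t" "perm_vertex \<sigma> w = v @ [i]"
      using vi unfolding sym_tree_def by (metis imageE)
    then show ?thesis
      by (elim perm_vertex_eq_snocE) (auto simp: sym_tree_def dest: plane_tree_prefix[OF t])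
  qed
  have "v @ [j] \<in> sym_tree \<sigma> t" if vi: "v @ [i] \<in> sym_tree \<sigma> t" and "j < i" for v i j
  proof -
    obtain u where u: "u \<in> t" "v = perm_vertex \<sigma> u"
      using parent[OF vi] unfolding sym_tree_def by auto
    then show ?thesis using that sym_tree_child_iff[OF t \<sigma> u(1)] by auto
  qed
  moreover have "finite (sym_tree \<sigma> t)" "[] \<in> sym_tree \<sigma> t"
    using t unfolding sym_tree_def plane_tree_def by (auto intro: image_eqI[of _ _ "[]"])
  ultimately show ?thesis using parent unfolding plane_tree_def by blast
qed

definition inv_perms :: "nat list set \<Rightarrow> (nat list \<Rightarrow> nat \<Rightarrow> nat) \<Rightarrow> nat list \<Rightarrow> nat \<Rightarrow> nat" where
  "inv_perms t \<sigma> = (\<lambda>w. if w \<in> sym_tree \<sigma> t then inv (\<sigma> (inv (perm_vertex \<sigma>) w)) else id)"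

lemma inv_perms_perm_vertex:
  assumes "\<sigma> \<in> perms t" "u \<in> t"
  shows "inv_perms t \<sigma> (perm_vertex \<sigma> u) = inv (\<sigma> u)"
  using assms inj_perm_vertex unfolding inv_perms_def sym_tree_def by simp

lemma inv_perms_in_perms:
  assumes t: "plane_tree t" and \<sigma>: "\<sigma> \<in> perms t"
  shows "inv_perms t \<sigma> \<in> perms (sym_tree \<sigma> t)"
proof -
  have "inv_perms t \<sigma> w permutes {..<nchild (sym_tree \<sigma> t) w}" if w: "w \<in> sym_tree \<sigma> t" for w
  proof -
    obtain u where "u \<in> t" "w = perm_vertex \<sigma> u" using w unfolding sym_tree_def by auto
    then show ?thesis
      using permutes_inv[OF perms_permutes[OF \<sigma>]] inv_perms_perm_vertex[OF \<sigma>]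
        nchild_sym_tree[OF t \<sigma>] by simp
  qed
  then show ?thesis unfolding perms_def by (simp add: inv_perms_def)
qed

lemma perm_word_inv_perms:
  assumes t: "plane_tree t" and \<sigma>: "\<sigma> \<in> perms t"
  shows "u @ w \<in> t \<Longrightarrow> perm_word (inv_perms t \<sigma>) (perm_vertex \<sigma> u) (perm_word \<sigma> u w) = w"
proof (induction w arbitrary: u)
  case (Cons i w)
  have "u \<in> t" using Cons.prems plane_tree_prefix[OF t] by blast
  then have "inv_perms t \<sigma> (perm_vertex \<sigma> u) (\<sigma> u i) = i"
    using inv_perms_perm_vertex[OF \<sigma>] perms_bij[OF \<sigma>] by (simp add: bij_is_inj)
  then show ?case using Cons by (simp add: perm_vertex_snoc[symmetric])
qed simp

lemma perm_vertex_inv_perms: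
  assumes "plane_tree t" "\<sigma> \<in> perms t" "v \<in> t"
  shows "perm_vertex (inv_perms t \<sigma>) (perm_vertex \<sigma> v) = v"
  using perm_word_inv_perms[OF assms(1,2), of "[]" v] assms(3) unfolding perm_vertex_def by simp

lemma sym_tree_inv_perms:
  assumes "plane_tree t" "\<sigma> \<in> perms t"
  shows "sym_tree (inv_perms t \<sigma>) (sym_tree \<sigma> t) = t"
  using perm_vertex_inv_perms[OF assms] by (simp add: sym_tree_def image_image)

lemma inv_perms_inv_perms:
  assumes t: "plane_tree t" and \<sigma>: "\<sigma> \<in> perms t"
  shows "inv_perms (sym_tree \<sigma> t) (inv_perms t \<sigma>) = \<sigma>"
proof
  fix v
  show "inv_perms (sym_tree \<sigma> t) (inv_perms t \<sigma>) v = \<sigma> v"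
  proof (cases "v \<in> t")
    case True
    have "inv_perms (sym_tree \<sigma> t) (inv_perms t \<sigma>) v = inv (inv_perms t \<sigma> (perm_vertex \<sigma> v))"
      using inv_perms_perm_vertex[OF inv_perms_in_perms[OF t \<sigma>], of "perm_vertex \<sigma> v"] True
      by (simp add: perm_vertex_inv_perms[OF t \<sigma>] sym_tree_def)
    also have "\<dots> = \<sigma> v"
      using inv_perms_perm_vertex[OF \<sigma> True] perms_bij[OF \<sigma>] by (simp add: inv_inv_eq)
    finally show ?thesis .
  next
    case False
    then show ?thesis
      using \<sigma> sym_tree_inv_perms[OF t \<sigma>] unfolding inv_perms_def perms_def by auto
  qed
qed

lemma bij_betw_restrict_perms:
  "bij_betw (\<lambda>\<sigma>. restrict \<sigma> t) (perms t) (\<Pi>\<^sub>E v\<in>t. {p. p permutes {..<nchild t v}})"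
  by (rule bij_betw_byWitness[where f' = "\<lambda>f v. if v \<in> t then f v else id"])
    (auto simp: perms_def fun_eq_iff PiE_def extensional_def)

lemma card_perms:
  assumes "plane_tree t"
  shows "card (perms t) = (\<Prod>v\<in>t. fact (nchild t v))"
proof -
  have "finite t" using assms by (simp add: plane_tree_def)
  then show ?thesis
    using bij_betw_same_card[OF bij_betw_restrict_perms]
    by (simp add: card_PiE card_permutations)
qed

lemma card_perms_pos: "plane_tree t \<Longrightarrow> 0 < card (perms t)"
  by (simp add: card_perms prod_pos)

lemma finite_perms: "plane_tree t \<Longrightarrow> finite (perms t)"
  using bij_betw_finite[OF bij_betw_restrict_perms]
  by (simp add: plane_tree_def finite_PiE finite_permutations)

lemma card_perms_sym_tree:
  assumes t: "plane_tree t" and \<sigma>: "\<sigma> \<in> perms t"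
  shows "card (perms (sym_tree \<sigma> t)) = card (perms t)"
proof -
  have "card (perms (sym_tree \<sigma> t)) = (\<Prod>w\<in>perm_vertex \<sigma> ` t. fact (nchild (sym_tree \<sigma> t) w))"
    using card_perms[OF plane_tree_sym_tree[OF t \<sigma>]] by (simp add: sym_tree_def)
  also have "\<dots> = (\<Prod>v\<in>t. fact (nchild (sym_tree \<sigma> t) (perm_vertex \<sigma> v)))"
    using inj_perm_vertex[OF \<sigma>] by (simp add: prod.reindex inj_on_def)
  finally show ?thesis by (simp add: card_perms[OF t] nchild_sym_tree[OF t \<sigma>])
qed

type_synonym 's typed_tree = "nat list set \<times> (nat list \<Rightarrow> 's)"

definition sym_shape :: "(nat list \<Rightarrow> nat \<Rightarrow> nat) \<Rightarrow> 's typed_tree \<Rightarrow> 's typed_tree" where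
  "sym_shape \<sigma> s = typed_shape (sym_tree \<sigma> (fst s)) (sym_lab \<sigma> (fst s) (snd s))"

definition typed_shapes :: "'s typed_tree set" where
  "typed_shapes = {typed_shape t \<tau> | t \<tau>. plane_tree t}"

lemma fst_typed_shape [simp]: "fst (typed_shape t \<tau>) = t"
  by (simp add: typed_shape_def)

lemma fst_sym_shape [simp]: "fst (sym_shape \<sigma> s) = sym_tree \<sigma> (fst s)"
  by (simp add: sym_shape_def)

lemma plane_tree_fst_typed_shapes: "s \<in> typed_shapes \<Longrightarrow> plane_tree (fst s)"
  unfolding typed_shapes_def by auto

lemma sym_shape_typed_shape:
  "sym_shape \<sigma> (typed_shape t \<tau>) = typed_shape (sym_tree \<sigma> t) (sym_lab \<sigma> t \<tau>)"
proof -
  have "inv_into t (perm_vertex \<sigma>) w \<in> t" if "w \<in> sym_tree \<sigma> t" for w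
    using that unfolding sym_tree_def by (rule inv_into_into)
  then show ?thesis
    unfolding sym_shape_def typed_shape_def sym_lab_def by (auto simp: fun_eq_iff)
qed

lemma sym_shape_in_typed_shapes:
  "s \<in> typed_shapes \<Longrightarrow> \<sigma> \<in> perms (fst s) \<Longrightarrow> sym_shape \<sigma> s \<in> typed_shapes"
  unfolding typed_shapes_def sym_shape_def using plane_tree_sym_tree by fastforce

lemma sym_shape_inv_perms:
  assumes s: "s \<in> typed_shapes" and \<sigma>: "\<sigma> \<in> perms (fst s)"
  shows "sym_shape (inv_perms (fst s) \<sigma>) (sym_shape \<sigma> s) = s"
proof -
  obtain t \<tau> where s_eq: "s = typed_shape t \<tau>" and t: "plane_tree t"
    using s unfolding typed_shapes_def by auto
  have \<sigma>': "\<sigma> \<in> perms t" using \<sigma> s_eq by simp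
  let ?P = "perm_vertex \<sigma>" and ?Q = "perm_vertex (inv_perms t \<sigma>)"
  have "sym_lab (inv_perms t \<sigma>) (sym_tree \<sigma> t) (sym_lab \<sigma> t \<tau>) v = \<tau> v" if v: "v \<in> t" for v
  proof -
    have "?P v \<in> sym_tree \<sigma> t" using v by (simp add: sym_tree_def)
    then have "inv_into (sym_tree \<sigma> t) ?Q v = ?P v"
      using perm_vertex_inv_perms[OF t \<sigma>' v] inj_perm_vertex[OF inv_perms_in_perms[OF t \<sigma>']]
      by (metis inv_into_f_eq inj_on_subset subset_UNIV)
    moreover have "inv_into t ?P (?P v) = v"
      using v inj_perm_vertex[OF \<sigma>'] by (metis inv_into_f_f inj_on_subset subset_UNIV)
    ultimately show ?thesis unfolding sym_lab_def by simp
  qed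
  then show ?thesis
    unfolding s_eq fst_typed_shape sym_shape_typed_shape sym_tree_inv_perms[OF t \<sigma>']
    by (simp add: typed_shape_def fun_eq_iff)
qed

lemma countable_typed_shapes: "countable (typed_shapes :: 's::countable typed_tree set)"
proof -
  define graph :: "'s typed_tree \<Rightarrow> (nat list \<times> 's) set" where
    "graph s = (\<lambda>v. (v, snd s v)) ` fst s" for s
  have "graph ` typed_shapes \<subseteq> Collect finite"
    unfolding graph_def typed_shapes_def plane_tree_def by auto
  moreover have "inj_on graph typed_shapes"
  proof (rule inj_onI)
    fix x y assume "x \<in> typed_shapes" "y \<in> typed_shapes" and graph: "graph x = graph y"
    then obtain t \<tau> t' \<tau>' where "x = typed_shape t \<tau>" "y = typed_shape t' \<tau>'"
      unfolding typed_shapes_def by auto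
    moreover have "fst x = fst y"
      using arg_cong[OF graph, of "image fst"] by (simp add: graph_def image_image)
    ultimately show "x = y"
      using graph by (auto simp: graph_def typed_shape_def fun_eq_iff)
  qed
  ultimately show ?thesis
    by (metis countable_Collect_finite countable_image_inj_on countable_subset)
qed

lemma nn_integral_count_space_Sigma:
  fixes f :: "'a \<times> 'b \<Rightarrow> ennreal"
  assumes A: "countable A" and B: "\<And>a. a \<in> A \<Longrightarrow> finite (B a)"
  shows "(\<integral>\<^sup>+p. f p \<partial>count_space (Sigma A B)) = (\<integral>\<^sup>+a. (\<Sum>b\<in>B a. f (a, b)) \<partial>count_space A)"
proof -
  have "(\<integral>\<^sup>+p. f p \<partial>count_space (Sigma A B)) =
      (\<integral>\<^sup>+p. (\<integral>\<^sup>+a. f p * indicator {fst p} a \<partial>count_space A) \<partial>count_space (Sigma A B))"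
    by (intro nn_integral_cong) (auto simp: nn_integral_cmult_indicator)
  also have "\<dots> = (\<integral>\<^sup>+a. (\<integral>\<^sup>+p. f p * indicator {fst p} a \<partial>count_space (Sigma A B)) \<partial>count_space A)"
    by (rule nn_integral_count_space_nn_integral[OF A]) simp
  also have "\<dots> = (\<integral>\<^sup>+a. (\<Sum>b\<in>B a. f (a, b)) \<partial>count_space A)"
  proof (rule nn_integral_cong)
    fix a assume "a \<in> space (count_space A)"
    then have "(\<integral>\<^sup>+p. f p * indicator {fst p} a \<partial>count_space (Sigma A B)) =
        (\<Sum>p\<in>Pair a ` B a. f p * indicator {fst p} a)"
      using B by (intro nn_integral_count_space') (auto split: split_indicator)
    also have "\<dots> = (\<Sum>b\<in>B a. f (a, b))"
      by (subst sum.reindex) (auto simp: inj_on_def)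
    finally show "(\<integral>\<^sup>+p. f p * indicator {fst p} a \<partial>count_space (Sigma A B)) = (\<Sum>b\<in>B a. f (a, b))" .
  qed
  finally show ?thesis .
qed

lemma nn_integral_countable_valued:
  fixes g :: "'b \<Rightarrow> ennreal"
  assumes U: "countable U" and f: "f \<in> measurable M (count_space U)"
  shows "(\<integral>\<^sup>+\<omega>. g (f \<omega>) \<partial>M) = (\<integral>\<^sup>+s. emeasure M (f -` {s} \<inter> space M) * g s \<partial>count_space U)"
proof -
  have f_space: "f \<omega> \<in> U" if "\<omega> \<in> space M" for \<omega>
    using measurable_space[OF f that] by simp
  have fibre: "f -` {s} \<inter> space M \<in> sets M" if "s \<in> U" for s
    using f that unfolding measurable_count_space_eq_countable[OF U] by blast
  have "(\<integral>\<^sup>+\<omega>. g (f \<omega>) \<partial>M) =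
      (\<integral>\<^sup>+\<omega>. (\<integral>\<^sup>+s. g s * indicator (f -` {s} \<inter> space M) \<omega> \<partial>count_space U) \<partial>M)"
  proof (rule nn_integral_cong)
    fix \<omega> assume \<omega>: "\<omega> \<in> space M"
    have "(\<integral>\<^sup>+s. g s * indicator (f -` {s} \<inter> space M) \<omega> \<partial>count_space U) =
        (\<Sum>s\<in>{f \<omega>}. g s * indicator (f -` {s} \<inter> space M) \<omega>)"
      using \<omega> f_space by (intro nn_integral_count_space') (auto split: split_indicator)
    then show "g (f \<omega>) = (\<integral>\<^sup>+s. g s * indicator (f -` {s} \<inter> space M) \<omega> \<partial>count_space U)"
      using \<omega> by simp
  qed
  also have "\<dots> = (\<integral>\<^sup>+s. (\<integral>\<^sup>+\<omega>. g s * indicator (f -` {s} \<inter> space M) \<omega> \<partial>M) \<partial>count_space U)"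
    using fibre by (intro nn_integral_count_space_nn_integral[OF U]) simp
  also have "\<dots> = (\<integral>\<^sup>+s. emeasure M (f -` {s} \<inter> space M) * g s \<partial>count_space U)"
    using fibre by (intro nn_integral_cong) (simp add: nn_integral_cmult_indicator mult.commute)
  finally show ?thesis .
qed

(* Reindex the pairs (s, sigma) by the involution (s, sigma) |-> (sigma s, sigma^-1),
   along which q and the number of permutation vectors are invariant. *)
lemma nn_integral_typed_shapes_sym_avg:
  fixes q :: "'s::countable typed_tree \<Rightarrow> ennreal" and h :: "'s typed_tree \<Rightarrow> real"
  assumes q: "\<And>s \<sigma>. s \<in> typed_shapes \<Longrightarrow> \<sigma> \<in> perms (fst s) \<Longrightarrow> q (sym_shape \<sigma> s) = q s"
    and h: "\<And>s. 0 \<le> h s"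
  shows "(\<integral>\<^sup>+s. q s * ennreal ((\<Sum>\<sigma>\<in>perms (fst s). h (sym_shape \<sigma> s)) / real (card (perms (fst s))))
           \<partial>count_space typed_shapes)
       = (\<integral>\<^sup>+s. q s * ennreal (h s) \<partial>count_space typed_shapes)"
proof -
  let ?S = "SIGMA s:(typed_shapes :: 's typed_tree set). perms (fst s)"
  let ?c = "\<lambda>s :: 's typed_tree. real (card (perms (fst s)))"
  define \<Phi> where "\<Phi> p = (sym_shape (snd p) (fst p), inv_perms (fst (fst p)) (snd p))"
    for p :: "'s typed_tree \<times> (nat list \<Rightarrow> nat \<Rightarrow> nat)"
  define F where "F p = q (fst p) * ennreal (h (sym_shape (snd p) (fst p)) / ?c (fst p))"
    for p :: "'s typed_tree \<times> (nat list \<Rightarrow> nat \<Rightarrow> nat)"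
  define G where "G p = q (fst p) * ennreal (h (fst p) / ?c (fst p))"
    for p :: "'s typed_tree \<times> (nat list \<Rightarrow> nat \<Rightarrow> nat)"
  have finite_perms_shape: "finite (perms (fst s))" if "s \<in> typed_shapes" for s :: "'s typed_tree"
    using finite_perms plane_tree_fst_typed_shapes that by blast
  have \<Phi>: "\<Phi> p \<in> ?S \<and> \<Phi> (\<Phi> p) = p \<and> G (\<Phi> p) = F p" if "p \<in> ?S" for p
  proof -
    obtain s \<sigma> where p: "p = (s, \<sigma>)" and s: "s \<in> typed_shapes" and \<sigma>: "\<sigma> \<in> perms (fst s)"
      using \<open>p \<in> ?S\<close> by blast
    note t = plane_tree_fst_typed_shapes[OF s]
    show ?thesis
      using sym_shape_in_typed_shapes[OF s \<sigma>] inv_perms_in_perms[OF t \<sigma>]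
        sym_shape_inv_perms[OF s \<sigma>] inv_perms_inv_perms[OF t \<sigma>] q[OF s \<sigma>] card_perms_sym_tree[OF t \<sigma>]
      by (simp add: p \<Phi>_def F_def G_def)
  qed
  have bij: "bij_betw \<Phi> ?S ?S"
    by (rule bij_betw_byWitness[where f' = \<Phi>]) (use \<Phi> in blast)+
  have avg: "(\<Sum>\<sigma>\<in>perms (fst s). q s * ennreal (x \<sigma> / ?c s)) = q s * ennreal ((\<Sum>\<sigma>\<in>perms (fst s). x \<sigma>) / ?c s)"
    if "\<And>\<sigma>. 0 \<le> x \<sigma>" for x and s :: "'s typed_tree"
    using that by (simp add: sum_distrib_left[symmetric] sum_divide_distrib)
  have "(\<integral>\<^sup>+s. q s * ennreal ((\<Sum>\<sigma>\<in>perms (fst s). h (sym_shape \<sigma> s)) / ?c s) \<partial>count_space typed_shapes)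
      = (\<integral>\<^sup>+s. (\<Sum>\<sigma>\<in>perms (fst s). F (s, \<sigma>)) \<partial>count_space typed_shapes)"
    using avg h by (simp add: F_def)
  also have "\<dots> = (\<integral>\<^sup>+p. F p \<partial>count_space ?S)"
    by (rule nn_integral_count_space_Sigma[OF countable_typed_shapes finite_perms_shape, symmetric])
  also have "\<dots> = (\<integral>\<^sup>+p. G (\<Phi> p) \<partial>count_space ?S)"
    using \<Phi> by (intro nn_integral_cong) simp
  also have "\<dots> = (\<integral>\<^sup>+p. G p \<partial>count_space ?S)"
    by (rule nn_integral_bij_count_space[OF bij])
  also have "\<dots> = (\<integral>\<^sup>+s. (\<Sum>\<sigma>\<in>perms (fst s). G (s, \<sigma>)) \<partial>count_space typed_shapes)"
    by (rule nn_integral_count_space_Sigma[OF countable_typed_shapes finite_perms_shape])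
  also have "\<dots> = (\<integral>\<^sup>+s. q s * ennreal (h s) \<partial>count_space typed_shapes)"
  proof (rule nn_integral_cong)
    fix s :: "'s typed_tree" assume "s \<in> space (count_space typed_shapes)"
    then have "?c s > 0"
      by (auto intro: card_perms_pos plane_tree_fst_typed_shapes)
    then show "(\<Sum>\<sigma>\<in>perms (fst s). G (s, \<sigma>)) = q s * ennreal (h s)"
      using avg[of "\<lambda>_. h s" s] h by (simp add: G_def)
  qed
  finally show ?thesis .
qed

lemma measurable_typed_shape:
  fixes ty :: "'a \<Rightarrow> nat list \<Rightarrow> 's::countable"
  assumes "random_labeled_tree M T ty D"
  shows "(\<lambda>\<omega>. typed_shape (T \<omega>) (ty \<omega>)) \<in> measurable M (count_space typed_shapes)"
  unfolding measurable_count_space_eq_countable[OF countable_typed_shapes]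
proof (intro conjI ballI)
  show "(\<lambda>\<omega>. typed_shape (T \<omega>) (ty \<omega>)) \<in> space M \<rightarrow> typed_shapes"
    using assms unfolding random_labeled_tree_def typed_shapes_def by auto
  fix s
  have "(\<lambda>\<omega>. typed_shape (T \<omega>) (ty \<omega>)) -` {s} \<inter> space M = shape_event M T ty s"
    unfolding shape_event_def by auto
  then show "(\<lambda>\<omega>. typed_shape (T \<omega>) (ty \<omega>)) -` {s} \<inter> space M \<in> sets M"
    using assms unfolding random_labeled_tree_def shape_event_def by (cases s) simp
qed

lemma borel_measurable_tree_functional:
  fixes ty :: "'a \<Rightarrow> nat list \<Rightarrow> 's::countable"
  assumes "random_labeled_tree M T ty D"
  shows "(\<lambda>\<omega>. f (T \<omega>)) \<in> borel_measurable M"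
  using measurable_compose[OF measurable_typed_shape[OF assms], of "\<lambda>s. f (fst s)"] by simp

lemma sym_expect_tree_functional:
  fixes ty :: "'a \<Rightarrow> nat list \<Rightarrow> 's::countable"
  assumes valid: "valid_law M T ty D" and h: "\<And>t. 0 \<le> h t"
  shows "sym_expect M T D (\<lambda>t d. h t) = (\<integral>\<omega>. h (T \<omega>) \<partial>M)"
proof -
  define shape where "shape \<omega> = typed_shape (T \<omega>) (ty \<omega>)" for \<omega>
  define q where "q s = emeasure M (shape_event M T ty s)" for s
  define avg where "avg s = (\<Sum>\<sigma>\<in>perms (fst s). h (fst (sym_shape \<sigma> s))) / real (card (perms (fst s)))"
    for s :: "'s typed_tree"
  have rlt: "random_labeled_tree M T ty D" using valid by (simp add: valid_law_def)
  then interpret prob_space M by (simp add: random_labeled_tree_def)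
  have shape: "shape \<in> measurable M (count_space typed_shapes)"
    unfolding shape_def by (rule measurable_typed_shape[OF rlt])
  have q_sym: "q (sym_shape \<sigma> s) = q s" if "s \<in> typed_shapes" "\<sigma> \<in> perms (fst s)" for s \<sigma>
    using that valid unfolding typed_shapes_def valid_law_def q_def
    by (auto simp: sym_shape_typed_shape emeasure_eq_measure)
  have integral_shape: "(\<integral>\<omega>. g (shape \<omega>) \<partial>M) = enn2real (\<integral>\<^sup>+s. q s * ennreal (g s) \<partial>count_space typed_shapes)"
    if "\<And>s. 0 \<le> g s" for g
  proof -
    have "shape -` {s} \<inter> space M = shape_event M T ty s" for s
      unfolding shape_def shape_event_def by auto
    then show ?thesis
      using that nn_integral_countable_valued[OF countable_typed_shapes shape, of "\<lambda>s. ennreal (g s)"]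
      by (simp add: integral_eq_nn_integral measurable_compose[OF shape] q_def)
  qed
  have "sym_expect M T D (\<lambda>t d. h t) = (\<integral>\<omega>. avg (shape \<omega>) \<partial>M)"
    by (simp add: sym_expect_def avg_def shape_def)
  also have "\<dots> = enn2real (\<integral>\<^sup>+s. q s * ennreal (h (fst s)) \<partial>count_space typed_shapes)"
    using integral_shape[of avg] nn_integral_typed_shapes_sym_avg[of q "\<lambda>s. h (fst s)", OF q_sym] h
    by (simp add: avg_def sum_nonneg)
  also have "\<dots> = (\<integral>\<omega>. h (T \<omega>) \<partial>M)"
    using integral_shape[of "\<lambda>s. h (fst s)"] h by (simp add: shape_def)
  finally show ?thesis .
qed

definition adjacent :: "nat list \<Rightarrow> nat list \<Rightarrow> bool" where
  "adjacent u w \<longleftrightarrow> (\<exists>i. w = u @ [i]) \<or> (\<exists>i. u = w @ [i])"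

lemma successively_adjacent_excursions:
  assumes "\<And>i. i \<in> set is \<Longrightarrow>
    f i \<noteq> [] \<and> successively adjacent (f i) \<and> adjacent v (hd (f i)) \<and> last (f i) = v"
  shows "successively adjacent (v # concat (map f is)) \<and> last (v # concat (map f is)) = v"
  using assms
proof (induction "is")
  case (Cons i "is")
  let ?r = "concat (map f is)"
  have IH: "successively adjacent (v # ?r)" "last (v # ?r) = v" using Cons by auto
  have fi: "f i \<noteq> []" "successively adjacent (f i)" "adjacent v (hd (f i))" "last (f i) = v"
    using Cons.prems by auto
  have "successively adjacent (v # f i)" using fi by (simp add: successively_Cons)
  moreover have "successively adjacent ?r" using IH(1) by (metis successively.simps(1) successively_Cons)
  moreover have "?r = [] \<or> adjacent (last (v # f i)) (hd ?r)"
    using IH(1) fi(1,4) by (auto simp: successively_Cons)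
  ultimately have "successively adjacent ((v # f i) @ ?r)"
    using successively_append_iff[of adjacent "v # f i" ?r] by blast
  moreover have "last ((v # f i) @ ?r) = v"
    using IH(2) fi(1,4) by (cases "?r = []") (metis append.right_neutral last_ConsR, metis last_ConsR last_appendR)
  ultimately show ?case by simp
qed simp

lemma contour_aux_walk:
  "contour_aux m t v \<noteq> [] \<and> successively adjacent (contour_aux m t v)
    \<and> hd (contour_aux m t v) = v \<and> last (contour_aux m t v) = v"
proof (induction m arbitrary: v)
  case (Suc m)
  have "successively adjacent (v # concat (map (\<lambda>i. contour_aux m t (v @ [i]) @ [v]) [0..<nchild t v]))
    \<and> last (v # concat (map (\<lambda>i. contour_aux m t (v @ [i]) @ [v]) [0..<nchild t v])) = v"
    using Suc.IH by (intro successively_adjacent_excursions) (auto simp: successively_append_iff adjacent_def)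
  then show ?case by simp
qed simp

definition subtree :: "nat list set \<Rightarrow> nat list \<Rightarrow> nat list set" where
  "subtree t v = {w \<in> t. \<exists>x. w = v @ x}"

lemma subtree_decomp:
  assumes t: "plane_tree t" and v: "v \<in> t"
  shows "subtree t v = insert v (\<Union>i<nchild t v. subtree t (v @ [i]))"
proof (intro set_eqI iffI)
  fix w assume "w \<in> subtree t v"
  then obtain x where w: "w \<in> t" "w = v @ x" unfolding subtree_def by auto
  show "w \<in> insert v (\<Union>i<nchild t v. subtree t (v @ [i]))"
  proof (cases x)
    case (Cons i y)
    then have "i < nchild t v"
      using w plane_tree_prefix[OF t, of "v @ [i]" y] plane_tree_child_iff[OF t] by simp
    then show ?thesis using w Cons unfolding subtree_def by auto
  qed (use w in simp)
qed (use v in \<open>auto simp: subtree_def\<close>)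

lemma length_contour_aux:
  assumes t: "plane_tree t"
  shows "v \<in> t \<Longrightarrow> (\<forall>w\<in>subtree t v. length w \<le> length v + m) \<Longrightarrow>
    length (contour_aux m t v) = 2 * card (subtree t v) - 1"
proof (induction m arbitrary: v)
  case 0
  then have "subtree t v = {v}" unfolding subtree_def by auto
  then show ?case by simp
next
  case (Suc m)
  have finite: "finite (subtree t u)" for u
    using t unfolding subtree_def plane_tree_def by simp
  have child: "v @ [i] \<in> t" if "i < nchild t v" for i
    using that plane_tree_child_iff[OF t] by simp
  have card_child: "length (contour_aux m t (v @ [i])) + 1 = 2 * card (subtree t (v @ [i]))"
    if i: "i < nchild t v" for i
  proof -
    have "v @ [i] \<in> subtree t (v @ [i])" using child[OF i] by (simp add: subtree_def)
    then have "card (subtree t (v @ [i])) > 0" using finite card_gt_0_iff by blast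
    moreover have "\<forall>w\<in>subtree t (v @ [i]). length w \<le> length (v @ [i]) + m"
      using Suc.prems(2) unfolding subtree_def by fastforce
    ultimately show ?thesis using Suc.IH[OF child[OF i]] by simp
  qed
  have "card (subtree t v) = Suc (\<Sum>i<nchild t v. card (subtree t (v @ [i])))"
  proof -
    have "v \<notin> (\<Union>i<nchild t v. subtree t (v @ [i]))" unfolding subtree_def by auto
    moreover have "subtree t (v @ [i]) \<inter> subtree t (v @ [j]) = {}" if "i \<noteq> j" for i j
      using that by (auto simp: subtree_def)
    then have "card (\<Union>i<nchild t v. subtree t (v @ [i])) = (\<Sum>i<nchild t v. card (subtree t (v @ [i])))"
      using finite by (intro card_UN_disjoint) auto
    ultimately show ?thesis
      using subtree_decomp[OF t Suc.prems(1)] finite by simp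
  qed
  moreover have "length (contour_aux (Suc m) t v) = 1 + (\<Sum>i<nchild t v. length (contour_aux m t (v @ [i])) + 1)"
    by (simp add: length_concat comp_def interv_sum_list_conv_sum_set_nat atLeast0LessThan)
  ultimately show ?case
    using card_child by (simp add: sum_distrib_left)
qed

lemma length_lt_card:
  assumes t: "plane_tree t" and w: "w \<in> t"
  shows "length w < card t"
proof -
  have "(\<lambda>j. take j w) ` {..length w} \<subseteq> t"
    using w plane_tree_prefix[OF t] by (auto, metis append_take_drop_id)
  moreover have "inj_on (\<lambda>j. take j w) {..length w}"
    by (rule inj_onI) (metis atMost_iff length_take min.absorb2)
  ultimately have "card {..length w} \<le> card t"
    using t unfolding plane_tree_def by (metis card_image card_mono)
  then show ?thesis by simp
qed

lemma length_contour:
  assumes t: "plane_tree t"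
  shows "length (contour_aux (card t) t []) = 2 * card t - 1"
proof -
  have "subtree t [] = t" unfolding subtree_def by auto
  moreover have "[] \<in> t" using t unfolding plane_tree_def by simp
  ultimately show ?thesis
    using length_contour_aux[OF t, of "[]" "card t"] length_lt_card[OF t] by fastforce
qed

lemma lcp_self: "lcp u u = u"
  by (induction u) auto

lemma lcp_commute: "lcp u v = lcp v u"
  by (induction u v rule: lcp.induct) auto

lemma tree_dist_self [simp]: "tree_dist u u = 0"
  by (simp add: tree_dist_def lcp_self)

lemma tree_dist_commute: "tree_dist u v = tree_dist v u"
  by (simp add: tree_dist_def lcp_commute add.commute)

lemma le_length_lcp:
  "take m u = take m w \<Longrightarrow> m \<le> length u \<Longrightarrow> m \<le> length w \<Longrightarrow> m \<le> length (lcp u w)"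
proof (induction u w arbitrary: m rule: lcp.induct)
  case (1 x xs y ys)
  then show ?case by (cases m) auto
qed auto

lemma walk_take_eq:
  assumes walk: "successively adjacent xs" and j: "j < length xs"
    and "i \<le> j" and high: "\<And>k. i \<le> k \<Longrightarrow> k \<le> j \<Longrightarrow> m \<le> length (xs ! k)"
  shows "take m (xs ! j) = take m (xs ! i)"
  using j \<open>i \<le> j\<close> high
proof (induction j)
  case (Suc j)
  show ?case
  proof (cases "i = Suc j")
    case False
    then have "take m (xs ! j) = take m (xs ! i)" using Suc by simp
    moreover have "adjacent (xs ! j) (xs ! Suc j)" using successively_nth[OF walk Suc.prems(1)] .
    moreover have "m \<le> length (xs ! j)" "m \<le> length (xs ! Suc j)" using Suc.prems False by auto
    ultimately show ?thesis unfolding adjacent_def by auto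
  qed simp
qed simp

lemma length_lcp_le: "length (lcp u w) \<le> length u"
  by (induction u w rule: lcp.induct) auto

(* The vertex of minimal height visited between times i and j is an ancestor of both. *)
lemma walk_tree_dist_le:
  assumes walk: "successively adjacent xs" and "i < length xs" "j < length xs"
  obtains k where "min i j \<le> k" "k \<le> max i j"
    "tree_dist (xs ! i) (xs ! j) + 2 * length (xs ! k) \<le> length (xs ! i) + length (xs ! j)"
proof -
  define lo hi where "lo = min i j" and "hi = max i j"
  define heights where "heights = (\<lambda>k. length (xs ! k)) ` {lo..hi}"
  have "finite heights" "heights \<noteq> {}" by (auto simp: heights_def lo_def hi_def)
  then have "Min heights \<in> (\<lambda>k. length (xs ! k)) ` {lo..hi}"
    using Min_in heights_def by blast
  then obtain k where k: "k \<in> {lo..hi}" "length (xs ! k) = Min heights"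
    by (metis imageE)
  have k_min: "length (xs ! k) \<le> length (xs ! k')" if "lo \<le> k'" "k' \<le> hi" for k'
    using that k(2) \<open>finite heights\<close> by (simp add: heights_def)
  have "take (length (xs ! k)) (xs ! hi) = take (length (xs ! k)) (xs ! lo)"
    using assms k_min by (intro walk_take_eq[OF walk]) (auto simp: lo_def hi_def)
  then have "length (xs ! k) \<le> length (lcp (xs ! lo) (xs ! hi))"
    using k_min[of lo] k_min[of hi] k(1) by (intro le_length_lcp) auto
  moreover have "length (lcp (xs ! lo) (xs ! hi)) \<le> length (xs ! hi)"
    using length_lcp_le[of "xs ! hi" "xs ! lo"] by (simp add: lcp_commute)
  ultimately have "tree_dist (xs ! lo) (xs ! hi) + 2 * length (xs ! k) \<le> length (xs ! lo) + length (xs ! hi)"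
    using length_lcp_le[of "xs ! lo" "xs ! hi"] unfolding tree_dist_def by linarith
  moreover have "tree_dist (xs ! lo) (xs ! hi) = tree_dist (xs ! i) (xs ! j)"
    "length (xs ! lo) + length (xs ! hi) = length (xs ! i) + length (xs ! j)"
    by (auto simp: lo_def hi_def min_def max_def tree_dist_commute)
  ultimately show ?thesis
    using that[of k] k(1) unfolding lo_def hi_def by simp
qed

definition cont_modulus :: "real \<Rightarrow> (real \<Rightarrow> real) \<Rightarrow> real" where
  "cont_modulus \<alpha> f = (SUP (s, s')\<in>{(s, s'). s \<in> {0..1} \<and> s' \<in> {0..1} \<and> \<bar>s - s'\<bar> \<le> \<alpha>}. \<bar>f s - f s'\<bar>)"

lemma cont_modulus_ge:
  assumes bound: "\<And>s. s \<in> {0..1} \<Longrightarrow> \<bar>f s\<bar> \<le> B"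
    and "s \<in> {0..1}" "s' \<in> {0..1}" "\<bar>s - s'\<bar> \<le> \<alpha>"
  shows "\<bar>f s - f s'\<bar> \<le> cont_modulus \<alpha> f"
  unfolding cont_modulus_def
proof (rule cSUP_upper2[where x = "(s, s')"])
  have "\<bar>f x - f x'\<bar> \<le> 2 * B" if "x \<in> {0..1}" "x' \<in> {0..1}" for x x'
    using bound[OF that(1)] bound[OF that(2)] by linarith
  then show "bdd_above ((\<lambda>(s, s'). \<bar>f s - f s'\<bar>) ` {(s, s'). s \<in> {0..1} \<and> s' \<in> {0..1} \<and> \<bar>s - s'\<bar> \<le> \<alpha>})"
    by (intro bdd_aboveI2[where M = "2 * B"]) auto
qed (use assms in auto)

lemma cont_modulus_le:
  assumes "\<alpha> \<ge> 0"
    and "\<And>s s'. s \<in> {0..1} \<Longrightarrow> s' \<in> {0..1} \<Longrightarrow> \<bar>s - s'\<bar> \<le> \<alpha> \<Longrightarrow> \<bar>f s - f s'\<bar> \<le> c"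
  shows "cont_modulus \<alpha> f \<le> c"
  unfolding cont_modulus_def
proof (rule cSUP_least)
  show "{(s, s'). s \<in> {0..1} \<and> s' \<in> {0..1} \<and> \<bar>s - s'\<bar> \<le> \<alpha>} \<noteq> {}"
    using assms(1) by (auto intro!: exI[of _ 0])
qed (use assms(2) in auto)

lemma cont_modulus_perturb:
  assumes "\<alpha> \<ge> 0"
    and bound_f: "\<And>s. s \<in> {0..1} \<Longrightarrow> \<bar>f s\<bar> \<le> Bf" and bound_g: "\<And>s. s \<in> {0..1} \<Longrightarrow> \<bar>g s\<bar> \<le> Bg"
    and close: "\<And>s. s \<in> {0..1} \<Longrightarrow> \<bar>f s - g s\<bar> \<le> d"
  shows "\<bar>cont_modulus \<alpha> f - cont_modulus \<alpha> g\<bar> \<le> 2 * d"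
proof -
  have "cont_modulus \<alpha> g \<le> cont_modulus \<alpha> f + 2 * d"
  proof (rule cont_modulus_le[OF \<open>\<alpha> \<ge> 0\<close>])
    fix s s' assume ss': "s \<in> {0..1}" "s' \<in> {0..1}" "\<bar>s - s'\<bar> \<le> \<alpha>"
    then show "\<bar>g s - g s'\<bar> \<le> cont_modulus \<alpha> f + 2 * d"
      using cont_modulus_ge[of f Bf, OF bound_f ss'] close[of s] close[of s'] by linarith
  qed
  moreover have "cont_modulus \<alpha> f \<le> cont_modulus \<alpha> g + 2 * d"
  proof (rule cont_modulus_le[OF \<open>\<alpha> \<ge> 0\<close>])
    fix s s' assume ss': "s \<in> {0..1}" "s' \<in> {0..1}" "\<bar>s - s'\<bar> \<le> \<alpha>"
    then show "\<bar>f s - f s'\<bar> \<le> cont_modulus \<alpha> g + 2 * d"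
      using cont_modulus_ge[of g Bg, OF bound_g ss'] close[of s] close[of s'] by linarith
  qed
  ultimately show ?thesis by linarith
qed

lemma bounded_on_unit_interval:
  fixes f :: "real \<Rightarrow> 'a::real_normed_vector"
  assumes "continuous_on {0..1} f"
  obtains B where "\<And>s. s \<in> {0..1} \<Longrightarrow> norm (f s) \<le> B"
proof -
  have "bounded (f ` {0..1})"
    by (rule compact_imp_bounded[OF compact_continuous_image[OF assms compact_Icc]])
  then show thesis using that unfolding bounded_iff by blast
qed

definition ramp :: "real \<Rightarrow> real \<Rightarrow> real" where
  "ramp \<beta> x = min 1 (max 0 (4 * x / \<beta> - 1))"

lemma ramp_nonneg: "0 \<le> ramp \<beta> x" and ramp_le_one: "ramp \<beta> x \<le> 1"
  by (simp_all add: ramp_def)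

lemma ramp_eq_one: "\<beta> > 0 \<Longrightarrow> \<beta> / 2 \<le> x \<Longrightarrow> ramp \<beta> x = 1"
  by (simp add: ramp_def field_simps)

lemma ramp_eq_zero: "\<beta> > 0 \<Longrightarrow> x \<le> \<beta> / 4 \<Longrightarrow> ramp \<beta> x = 0"
  by (simp add: ramp_def field_simps)

lemma ramp_lipschitz:
  assumes "\<beta> > 0"
  shows "\<bar>ramp \<beta> x - ramp \<beta> y\<bar> \<le> 4 / \<beta> * \<bar>x - y\<bar>"
proof -
  have "\<bar>min 1 (max 0 u) - min 1 (max 0 v)\<bar> \<le> \<bar>u - v\<bar>" for u v :: real
    by (simp add: min_def max_def abs_if)
  moreover have "(4 * x / \<beta> - 1) - (4 * y / \<beta> - 1) = 4 / \<beta> * (x - y)"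
    by (simp add: algebra_simps diff_divide_distrib)
  then have "\<bar>(4 * x / \<beta> - 1) - (4 * y / \<beta> - 1)\<bar> = 4 / \<beta> * \<bar>x - y\<bar>"
    using assms by (simp only: abs_mult) simp
  ultimately show ?thesis unfolding ramp_def by metis
qed

(* The ramp makes modulus_functional bounded and continuous while it dominates the
   indicator of {cont_modulus >= beta/2} and vanishes where cont_modulus <= beta/4. *)
definition modulus_functional :: "real \<Rightarrow> real \<Rightarrow> (real \<Rightarrow> real \<times> real) \<Rightarrow> real" where
  "modulus_functional \<alpha> \<beta> f = ramp \<beta> (cont_modulus \<alpha> (\<lambda>s. fst (f s)))"

lemma bcont_modulus_functional:
  assumes "\<alpha> \<ge> 0" and "\<beta> > 0"
  shows "bcont_functional (modulus_functional \<alpha> \<beta>)"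
  unfolding bcont_functional_def
proof (intro conjI allI impI)
  show "\<exists>B. \<forall>f. continuous_on {0..1} f \<longrightarrow> \<bar>modulus_functional \<alpha> \<beta> f\<bar> \<le> B"
    using ramp_nonneg ramp_le_one by (intro exI[of _ 1]) (simp add: modulus_functional_def)
next
  fix f :: "real \<Rightarrow> real \<times> real" and e :: real
  assume f: "continuous_on {0..1} f" and "0 < e"
  show "\<exists>\<delta>>0. \<forall>g. continuous_on {0..1} g \<and> unif_dist f g < \<delta>
          \<longrightarrow> \<bar>modulus_functional \<alpha> \<beta> g - modulus_functional \<alpha> \<beta> f\<bar> < e"
  proof (intro exI[of _ "e * \<beta> / 16"] conjI allI impI)
    show "0 < e * \<beta> / 16" using \<open>0 < e\<close> \<open>\<beta> > 0\<close> by simp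
    fix g assume g: "continuous_on {0..1} g \<and> unif_dist f g < e * \<beta> / 16"
    obtain Bf where Bf: "\<And>s. s \<in> {0..1} \<Longrightarrow> \<bar>fst (f s)\<bar> \<le> Bf"
      using bounded_on_unit_interval[OF continuous_on_fst[OF f]] by auto
    obtain Bg where Bg: "\<And>s. s \<in> {0..1} \<Longrightarrow> \<bar>fst (g s)\<bar> \<le> Bg"
      using bounded_on_unit_interval[OF continuous_on_fst[of _ g]] g by auto
    obtain Bd where Bd: "\<And>s. s \<in> {0..1} \<Longrightarrow> norm (dist (f s) (g s)) \<le> Bd"
      using bounded_on_unit_interval[OF continuous_on_dist[OF f, of g]] g by auto
    have close: "\<bar>fst (f s) - fst (g s)\<bar> \<le> unif_dist f g" if "s \<in> {0..1}" for s
    proof -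
      have "\<bar>fst (f s) - fst (g s)\<bar> \<le> dist (f s) (g s)"
        using dist_fst_le[of "f s" "g s"] by (simp add: dist_real_def)
      also have "\<dots> \<le> unif_dist f g"
        unfolding unif_dist_def using Bd that by (intro cSUP_upper bdd_aboveI2[where M = Bd]) auto
      finally show ?thesis .
    qed
    have modulus_close:
      "\<bar>cont_modulus \<alpha> (\<lambda>s. fst (g s)) - cont_modulus \<alpha> (\<lambda>s. fst (f s))\<bar> \<le> 2 * unif_dist f g"
      using cont_modulus_perturb[OF \<open>\<alpha> \<ge> 0\<close> Bf Bg close] by (simp add: abs_minus_commute)
    have "\<bar>modulus_functional \<alpha> \<beta> g - modulus_functional \<alpha> \<beta> f\<bar>
        \<le> 4 / \<beta> * \<bar>cont_modulus \<alpha> (\<lambda>s. fst (g s)) - cont_modulus \<alpha> (\<lambda>s. fst (f s))\<bar>"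
      unfolding modulus_functional_def by (rule ramp_lipschitz[OF \<open>\<beta> > 0\<close>])
    also have "\<dots> \<le> 4 / \<beta> * (2 * unif_dist f g)"
      using modulus_close \<open>\<beta> > 0\<close> by (intro mult_left_mono) auto
    also have "\<dots> < 4 / \<beta> * (2 * (e * \<beta> / 16))"
      using g \<open>\<beta> > 0\<close> by (intro mult_strict_left_mono) auto
    also have "\<dots> < e" using \<open>0 < e\<close> \<open>\<beta> > 0\<close> by (simp add: field_simps)
    finally show "\<bar>modulus_functional \<alpha> \<beta> g - modulus_functional \<alpha> \<beta> f\<bar> < e" .
  qed
qed

lemma eventually_cont_modulus_le:
  assumes "continuous_on {0..1} f" and "e > 0"
  shows "eventually (\<lambda>k. cont_modulus (1 / real (Suc k)) f \<le> e) sequentially"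
proof -
  obtain d where "d > 0" and d: "\<And>s s'. s \<in> {0..1} \<Longrightarrow> s' \<in> {0..1} \<Longrightarrow> dist s' s < d \<Longrightarrow> dist (f s') (f s) < e"
    using compact_uniformly_continuous[OF assms(1) compact_Icc] \<open>e > 0\<close>
    unfolding uniformly_continuous_on_def by blast
  obtain k0 where k0: "inverse (real (Suc k0)) < d"
    using reals_Archimedean[OF \<open>d > 0\<close>] by blast
  show ?thesis
  proof (rule eventually_sequentiallyI[of k0])
    fix k assume "k0 \<le> k"
    then have "1 / real (Suc k) \<le> inverse (real (Suc k0))"
      by (simp add: inverse_eq_divide field_simps)
    then show "cont_modulus (1 / real (Suc k)) f \<le> e"
      using d k0 by (intro cont_modulus_le) (auto simp: dist_real_def less_imp_le)
  qed
qed

lemma exists_modulus_functional_integral_less: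
  assumes X: "cont_process N X" and "\<beta> > 0"
  shows "\<exists>\<alpha>>0. (\<integral>\<omega>. modulus_functional \<alpha> \<beta> (X \<omega>) \<partial>N) < \<beta>"
proof -
  interpret prob_space N using X by (simp add: cont_process_def)
  define u where "u k \<omega> = modulus_functional (1 / real (Suc k)) \<beta> (X \<omega>)" for k \<omega>
  show ?thesis
  proof (cases "\<forall>k. integrable N (u k)")
    case False
    \<comment> \<open>measurability of \<open>u k\<close> is not assumed; a non-integrable \<open>u k\<close> has Bochner integral 0\<close>
    then obtain k where "(\<integral>\<omega>. u k \<omega> \<partial>N) = 0" using not_integrable_integral_eq by blast
    then show ?thesis using \<open>\<beta> > 0\<close> unfolding u_def by (intro exI[of _ "1 / real (Suc k)"]) auto
  next
    case True
    have "(\<lambda>k. \<integral>\<omega>. u k \<omega> \<partial>N) \<longlonglongrightarrow> (\<integral>\<omega>. 0 \<partial>N)"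
    proof (rule integral_dominated_convergence[where w = "\<lambda>_. 1"])
      show "AE \<omega> in N. (\<lambda>k. u k \<omega>) \<longlonglongrightarrow> 0"
      proof (rule AE_I2)
        fix \<omega> assume "\<omega> \<in> space N"
        then have "continuous_on {0..1} (\<lambda>s. fst (X \<omega> s))"
          using X unfolding cont_process_def by (blast intro: continuous_on_fst)
        then have "eventually (\<lambda>k. cont_modulus (1 / real (Suc k)) (\<lambda>s. fst (X \<omega> s)) \<le> \<beta> / 4) sequentially"
          using \<open>\<beta> > 0\<close> by (intro eventually_cont_modulus_le) auto
        then have "eventually (\<lambda>k. u k \<omega> = 0) sequentially"
          by (rule eventually_mono) (simp add: u_def modulus_functional_def ramp_eq_zero[OF \<open>\<beta> > 0\<close>])
        then show "(\<lambda>k. u k \<omega>) \<longlonglongrightarrow> 0" by (rule tendsto_eventually)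
      qed
      show "AE \<omega> in N. norm (u k \<omega>) \<le> 1" for k
        using ramp_nonneg ramp_le_one by (simp add: u_def modulus_functional_def)
      show "u k \<in> borel_measurable N" for k using True by blast
    qed simp_all
    then have "eventually (\<lambda>k. (\<integral>\<omega>. u k \<omega> \<partial>N) < \<beta>) sequentially"
      using \<open>\<beta> > 0\<close> by (simp add: order_tendstoD)
    then obtain k where "(\<integral>\<omega>. u k \<omega> \<partial>N) < \<beta>"
      unfolding eventually_sequentially by blast
    then show ?thesis unfolding u_def by (intro exI[of _ "1 / real (Suc k)"]) auto
  qed
qed

lemma lin_interp_at: "N > 0 \<Longrightarrow> i \<le> N \<Longrightarrow> lin_interp N f (real i / real N) = f i"
  by (simp add: lin_interp_def Let_def)

lemma lin_interp_bounded:
  obtains B where "\<And>s. s \<in> {0..1} \<Longrightarrow> \<bar>lin_interp N f s\<bar> \<le> B"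
proof -
  define B where "B = (\<Sum>k\<le>N. \<bar>f k\<bar>)"
  have f_le: "\<bar>f k\<bar> \<le> B" if "k \<le> N" for k
    unfolding B_def using that by (intro member_le_sum) auto
  have "\<bar>lin_interp N f s\<bar> \<le> 3 * B" if "s \<in> {0..1}" for s
  proof -
    define x where "x = s * real N"
    define i where "i = nat \<lfloor>x\<rfloor>"
    have "0 \<le> x" using that by (simp add: x_def)
    then have frac: "0 \<le> x - real i" "x - real i \<le> 1" unfolding i_def by linarith+
    have "0 \<le> B" using f_le[of 0] by linarith
    consider "N = 0" | "N \<noteq> 0" "N \<le> i" | "i < N" by linarith
    then show ?thesis
    proof cases
      case 3
      have "\<bar>(x - real i) * (f (Suc i) - f i)\<bar> \<le> \<bar>f (Suc i) - f i\<bar>"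
        using frac by (simp add: abs_mult mult_left_le_one_le)
      then show ?thesis
        using 3 f_le[of i] f_le[of "Suc i"]
        unfolding lin_interp_def Let_def x_def[symmetric] i_def[symmetric] by simp
    qed (use f_le[of 0] f_le[of N] \<open>0 \<le> B\<close> in \<open>simp_all add: lin_interp_def Let_def x_def[symmetric] i_def[symmetric]\<close>)
  qed
  then show thesis using that by blast
qed

lemma contour_fun_bounded:
  obtains B where "\<And>s. s \<in> {0..1} \<Longrightarrow> \<bar>a * contour_fun t s\<bar> \<le> B"
proof -
  obtain B where "\<And>s. s \<in> {0..1} \<Longrightarrow> \<bar>contour_fun t s\<bar> \<le> B"
    unfolding contour_fun_def using lin_interp_bounded by blast
  then have "\<bar>a * contour_fun t s\<bar> \<le> \<bar>a\<bar> * B" if "s \<in> {0..1}" for s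
    using that by (simp add: abs_mult mult_left_mono)
  then show thesis using that by blast
qed

lemma height_diff_le_cont_modulus:
  assumes "2 \<le> card t" "i \<le> 2 * card t - 2" "k \<le> 2 * card t - 2"
    and window: "\<bar>int i - int k\<bar> \<le> \<lfloor>\<alpha> * real (card t)\<rfloor>" and "0 \<le> \<alpha>"
  shows "a * (real (length (theta t i)) - real (length (theta t k)))
           \<le> cont_modulus \<alpha> (\<lambda>s. a * contour_fun t s)"
proof -
  define N where "N = 2 * card t - 2"
  have N: "0 < N" "real (card t) \<le> real N" using \<open>2 \<le> card t\<close> by (auto simp: N_def)
  have "\<bar>real i - real k\<bar> = real_of_int \<bar>int i - int k\<bar>" by simp
  also have "\<dots> \<le> real_of_int \<lfloor>\<alpha> * real (card t)\<rfloor>" using window by linarith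
  also have "\<dots> \<le> \<alpha> * real (card t)" by (rule of_int_floor_le)
  also have "\<dots> \<le> \<alpha> * real N" using N \<open>0 \<le> \<alpha>\<close> by (intro mult_left_mono) auto
  finally have "\<bar>real i / real N - real k / real N\<bar> \<le> \<alpha>"
    using N by (simp add: field_simps flip: diff_divide_distrib)
  moreover have "real i / real N \<in> {0..1}" "real k / real N \<in> {0..1}"
    using assms N by (auto simp: N_def)
  moreover obtain B where "\<And>s. s \<in> {0..1} \<Longrightarrow> \<bar>a * contour_fun t s\<bar> \<le> B"
    using contour_fun_bounded by blast
  ultimately have "\<bar>a * contour_fun t (real i / real N) - a * contour_fun t (real k / real N)\<bar>
      \<le> cont_modulus \<alpha> (\<lambda>s. a * contour_fun t s)"
    by (intro cont_modulus_ge[where f = "\<lambda>s. a * contour_fun t s"]) auto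
  moreover have "contour_fun t (real p / real N) = real (length (theta t p))" if "p \<le> N" for p
    using lin_interp_at[OF N(1) that] by (simp add: contour_fun_def N_def)
  ultimately show ?thesis
    using assms by (simp add: N_def right_diff_distrib)
qed

lemma tree_dist_theta_le_cont_modulus:
  assumes t: "plane_tree t" and ij: "i \<le> 2 * card t - 2" "j \<le> 2 * card t - 2"
    and window: "\<bar>int i - int j\<bar> \<le> \<lfloor>\<alpha> * real (card t)\<rfloor>" and "0 \<le> \<alpha>" and "0 \<le> a"
  shows "a * real (tree_dist (theta t i) (theta t j)) \<le> 2 * cont_modulus \<alpha> (\<lambda>s. a * contour_fun t s)"
proof (cases "2 \<le> card t")
  case False
  then have "i = j" using ij by simp
  moreover obtain B where "\<And>s. s \<in> {0..1} \<Longrightarrow> \<bar>a * contour_fun t s\<bar> \<le> B"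
    using contour_fun_bounded by blast
  then have "0 \<le> cont_modulus \<alpha> (\<lambda>s. a * contour_fun t s)"
    using cont_modulus_ge[of "\<lambda>s. a * contour_fun t s" B 0 0 \<alpha>] \<open>0 \<le> \<alpha>\<close> by simp
  ultimately show ?thesis by simp
next
  case True
  define xs where "xs = contour_aux (card t) t []"
  have theta: "theta t p = xs ! p" for p by (simp add: theta_def xs_def)
  have "i < length xs" "j < length xs" using ij True length_contour[OF t] by (auto simp: xs_def)
  then obtain k where k: "min i j \<le> k" "k \<le> max i j"
    "tree_dist (xs ! i) (xs ! j) + 2 * length (xs ! k) \<le> length (xs ! i) + length (xs ! j)"
    using walk_tree_dist_le contour_aux_walk unfolding xs_def by blast
  have "real (tree_dist (xs ! i) (xs ! j))
      \<le> (real (length (xs ! i)) - real (length (xs ! k))) + (real (length (xs ! j)) - real (length (xs ! k)))"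
    using of_nat_mono[OF k(3), where 'a = real] by simp
  then have "a * real (tree_dist (xs ! i) (xs ! j))
      \<le> a * (real (length (xs ! i)) - real (length (xs ! k))) + a * (real (length (xs ! j)) - real (length (xs ! k)))"
    using \<open>0 \<le> a\<close> by (metis distrib_left mult_left_mono)
  moreover have "\<bar>int i - int k\<bar> \<le> \<lfloor>\<alpha> * real (card t)\<rfloor>" "\<bar>int j - int k\<bar> \<le> \<lfloor>\<alpha> * real (card t)\<rfloor>"
    using k(1,2) window by linarith+
  moreover have "k \<le> 2 * card t - 2" using k(2) ij by linarith
  ultimately show ?thesis
    using height_diff_le_cont_modulus[OF True ij(1), of k \<alpha> a]
      height_diff_le_cont_modulus[OF True ij(2), of k \<alpha> a] \<open>0 \<le> \<alpha>\<close>
    unfolding theta by linarith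
qed

definition distant_pair_in_window :: "real \<Rightarrow> real \<Rightarrow> real \<Rightarrow> nat list set \<Rightarrow> bool" where
  "distant_pair_in_window \<alpha> a \<beta> t \<longleftrightarrow> (\<exists>i j. i \<le> 2 * card t - 2 \<and> j \<le> 2 * card t - 2
     \<and> \<bar>int i - int j\<bar> \<le> \<lfloor>\<alpha> * real (card t)\<rfloor> \<and> a * real (tree_dist (theta t i) (theta t j)) > \<beta>)"

lemma ramp_cont_modulus_eq_one:
  assumes "plane_tree t" "distant_pair_in_window \<alpha> a \<beta> t" "0 \<le> \<alpha>" "0 \<le> a" "0 < \<beta>"
  shows "ramp \<beta> (cont_modulus \<alpha> (\<lambda>s. a * contour_fun t s)) = 1"
proof (rule ramp_eq_one[OF \<open>0 < \<beta>\<close>])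
  show "\<beta> / 2 \<le> cont_modulus \<alpha> (\<lambda>s. a * contour_fun t s)"
    using assms tree_dist_theta_le_cont_modulus unfolding distant_pair_in_window_def by fastforce
qed

lemma measure_tree_event_le_integral:
  fixes ty :: "'a \<Rightarrow> nat list \<Rightarrow> 's::countable"
  assumes rlt: "random_labeled_tree M T ty D"
    and h: "\<And>t. 0 \<le> h t" "\<And>t. h t \<le> 1" and event: "\<And>t. plane_tree t \<Longrightarrow> P t \<Longrightarrow> h t = 1"
  shows "measure M {\<omega> \<in> space M. P (T \<omega>)} \<le> (\<integral>\<omega>. h (T \<omega>) \<partial>M)"
proof -
  interpret prob_space M using rlt by (simp add: random_labeled_tree_def)
  have [measurable]: "(\<lambda>\<omega>. h (T \<omega>)) \<in> borel_measurable M"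
    by (rule borel_measurable_tree_functional[OF rlt])
  have "integrable M (\<lambda>\<omega>. h (T \<omega>))"
    using h by (intro integrable_const_bound[where B = 1]) auto
  have "measure M {\<omega> \<in> space M. P (T \<omega>)} \<le> measure M {\<omega> \<in> space M. 1 \<le> h (T \<omega>)}"
    using rlt event by (intro finite_measure_mono) (auto simp: random_labeled_tree_def)
  also have "\<dots> \<le> (\<integral>\<omega>. h (T \<omega>) \<partial>M) / 1"
    using h by (intro integral_Markov_inequality_measure[OF \<open>integrable M _\<close> sets.top]) auto
  finally show ?thesis by simp
qed

lemma limsup_less_if_le_tendsto:
  fixes x y :: "nat \<Rightarrow> real"
  assumes "\<And>n. x n \<le> y n" and "y \<longlonglongrightarrow> L" and "L < c"
  shows "limsup (\<lambda>n. ereal (x n)) < ereal c"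
proof -
  have "limsup (\<lambda>n. ereal (x n)) \<le> limsup (\<lambda>n. ereal (y n))"
    using assms(1) by (intro Limsup_mono) simp
  also have "\<dots> = ereal L"
    using assms(2) by (intro lim_imp_Limsup tendsto_ereal) simp_all
  finally show ?thesis using assms(3) by (simp add: order_le_less_trans)
qed

theorem lemma3p3:
  fixes M :: "nat \<Rightarrow> 'a measure"
    and T :: "nat \<Rightarrow> 'a \<Rightarrow> nat list set"
    and ty :: "nat \<Rightarrow> 'a \<Rightarrow> nat list \<Rightarrow> 's::countable"
    and D :: "nat \<Rightarrow> 'a \<Rightarrow> nat list \<Rightarrow> real"
    and a b :: "nat \<Rightarrow> real"
    and N :: "'b measure"
    and X :: "'b \<Rightarrow> real \<Rightarrow> real \<times> real"
  assumes valid: "\<And>n. valid_law (M n) (T n) (ty n) (D n)"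
    and a_pos: "\<And>n. a n > 0" and b_pos: "\<And>n. b n > 0"
    and a_lim: "a \<longlonglongrightarrow> 0" and b_lim: "b \<longlonglongrightarrow> 0"
    and X_proc: "cont_process N X"
    and conv: "\<And>G. bcont_functional G \<Longrightarrow>
        (\<lambda>n. sym_expect (M n) (T n) (D n)
               (\<lambda>t d. G (\<lambda>s. (a n * contour_fun t s, b n * label_fun t d s))))
        \<longlonglongrightarrow> (\<integral>\<omega>. G (X \<omega>) \<partial>N)"
  shows "\<forall>\<beta>>0. \<exists>\<alpha>>0. limsup (\<lambda>n. ereal (measure (M n)
           {\<omega>\<in>space (M n). \<exists>i j. i \<le> 2 * card (T n \<omega>) - 2 \<and> j \<le> 2 * card (T n \<omega>) - 2
              \<and> \<bar>int i - int j\<bar> \<le> \<lfloor>\<alpha> * real (card (T n \<omega>))\<rfloor>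
              \<and> a n * real (tree_dist (theta (T n \<omega>) i) (theta (T n \<omega>) j)) > \<beta>})) < ereal \<beta>"
proof (intro allI impI)
  fix \<beta> :: real assume "\<beta> > 0"
  obtain \<alpha> where "\<alpha> > 0" and small: "(\<integral>\<omega>. modulus_functional \<alpha> \<beta> (X \<omega>) \<partial>N) < \<beta>"
    using exists_modulus_functional_integral_less[OF X_proc \<open>\<beta> > 0\<close>] by blast
  define h where "h n t = ramp \<beta> (cont_modulus \<alpha> (\<lambda>s. a n * contour_fun t s))" for n t
  have "(\<lambda>n. \<integral>\<omega>. h n (T n \<omega>) \<partial>M n) \<longlonglongrightarrow> (\<integral>\<omega>. modulus_functional \<alpha> \<beta> (X \<omega>) \<partial>N)"
    using conv[OF bcont_modulus_functional] \<open>\<alpha> > 0\<close> \<open>\<beta> > 0\<close>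
    by (simp add: modulus_functional_def h_def ramp_nonneg
        flip: sym_expect_tree_functional[OF valid, of "h _", unfolded h_def])
  moreover have "measure (M n) {\<omega> \<in> space (M n). distant_pair_in_window \<alpha> (a n) \<beta> (T n \<omega>)}
      \<le> (\<integral>\<omega>. h n (T n \<omega>) \<partial>M n)" for n
    using valid[of n] \<open>\<alpha> > 0\<close> \<open>\<beta> > 0\<close> a_pos[of n]
    by (intro measure_tree_event_le_integral)
      (auto simp: valid_law_def h_def ramp_nonneg ramp_le_one ramp_cont_modulus_eq_one)
  ultimately have "limsup (\<lambda>n. ereal (measure (M n)
      {\<omega> \<in> space (M n). distant_pair_in_window \<alpha> (a n) \<beta> (T n \<omega>)})) < ereal \<beta>"
    using small by (intro limsup_less_if_le_tendsto)
  then show "\<exists>\<alpha>>0. limsup (\<lambda>n. ereal (measure (M n)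
           {\<omega>\<in>space (M n). \<exists>i j. i \<le> 2 * card (T n \<omega>) - 2 \<and> j \<le> 2 * card (T n \<omega>) - 2
              \<and> \<bar>int i - int j\<bar> \<le> \<lfloor>\<alpha> * real (card (T n \<omega>))\<rfloor>
              \<and> a n * real (tree_dist (theta (T n \<omega>) i) (theta (T n \<omega>) j)) > \<beta>})) < ereal \<beta>"
    using \<open>\<alpha> > 0\<close> unfolding distant_pair_in_window_def by blast
qed

end
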